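(* Let $G$ be a graph on $n$ vertices and $A\in\mathcal{S}(G)$ a matrix with the SAP and $\operatorname{rank}(A)=r$. Then for every integer $r'$ with $r\le r'\le n$ there is a matrix $A'\in\mathcal{S}(G)$ with the SAP and $\operatorname{rank}(A')=r'$.
   Context: For a graph $G$ on vertex set $\{1,\ldots,n\}$, $\mathcal{S}(G)$ is the set of real symmetric $n\times n$ matrices whose $(i,j)$-entry for $i\neq j$ is nonzero if and only if $\{i,j\}$ is an edge (diagonal entries arbitrary). $\circ$ is the entrywise product. A symmetric matrix $A$ has the strong Arnol'd property (SAP) if $X=O$ is the only real symmetric matrix with $A\circ X=O$, $I\circ X=O$, $AX=O$. *)

theory Defs
  imports "HOL-Analysis.Analysis"
begin

definition simple_graph :: "('n::finite \<Rightarrow> 'n \<Rightarrow> bool) \<Rightarrow> bool" where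
  "simple_graph E \<longleftrightarrow> (\<forall>i j. E i j \<longrightarrow> E j i) \<and> (\<forall>i. \<not> E i i)"

definition symmetric_matrix :: "real^'n^'n \<Rightarrow> bool" where
  "symmetric_matrix A \<longleftrightarrow> transpose A = A"

definition S_graph :: "('n::finite \<Rightarrow> 'n \<Rightarrow> bool) \<Rightarrow> (real^'n^'n) set" where
  "S_graph E = {A. symmetric_matrix A \<and> (\<forall>i j. i \<noteq> j \<longrightarrow> (A $ i $ j \<noteq> 0 \<longleftrightarrow> E i j))}"

definition hadamard :: "real^'n^'m \<Rightarrow> real^'n^'m \<Rightarrow> real^'n^'m" where
  "hadamard A B = (\<chi> i j. A $ i $ j * B $ i $ j)"

definition SAP :: "real^'n^'n \<Rightarrow> bool" where
  "SAP A \<longleftrightarrow> (\<forall>X::real^'n^'n. symmetric_matrix X \<and> hadamard A X = 0 \<and>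
      hadamard (mat 1) X = 0 \<and> A ** X = 0 \<longrightarrow> X = 0)"

end

theory Submission
  imports Defs
begin

(* Perturb A by t on the diagonal entries of a set K of vertices: A + t D_K, where D_K is the
   diagonal 0/1 matrix supported on K. For small t > 0 it
   keeps the SAP, uniformly in K, because the SAP makes X |-> A X bounded below on the symmetric
   matrices X with A o X = O and I o X = O, while |D_K X| <= |X|. For K = all vertices it is
   A + t I, which is nonsingular for small t > 0 since A is symmetric. Adding one vertex to K
   changes one row and so raises the rank by at most one; growing K vertex by vertex from the
   empty set to all vertices therefore passes through every rank between rank A and n. *)

lemma linear_inj_on_subspace_bounded_below_pos:
  fixes f :: "'a::euclidean_space \<Rightarrow> 'b::euclidean_space"
  assumes lf: "linear f" and W: "subspace W" and inj: "\<forall>x\<in>W. f x = 0 \<longrightarrow> x = 0"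
  obtains c where "c > 0" "\<And>x. x \<in> W \<Longrightarrow> c * norm x \<le> norm (f x)"
proof -
  have "inj_on f (span W)"
    using linear_inj_on_iff_eq_0[OF lf W] inj W span_eq_iff by metis
  then obtain g where lg: "linear g" and g: "\<forall>x\<in>span W. g (f x) = x"
    using linear_inj_on_left_inverse[OF lf] by blast
  obtain B where B: "B > 0" "\<And>y. norm (g y) \<le> B * norm y"
    using linear_bounded_pos[OF lg] by blast
  show thesis
  proof
    show "0 < 1/B" using B by simp
    fix x assume "x \<in> W"
    then have "norm x \<le> B * norm (f x)" using g B(2)[of "f x"] span_superset by fastforce
    then show "1/B * norm x \<le> norm (f x)" using B by (simp add: field_simps)
  qed
qed

lemma rank_le_Suc_rank_if_rows_agree_except:
  fixes B B' :: "real^'n^'m"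
  assumes "\<forall>i. i \<noteq> k \<longrightarrow> B' $ i = B $ i"
  shows "rank B' \<le> rank B + 1"
proof -
  have "rows B' \<subseteq> insert (row k B') (rows B)"
    using assms by (auto simp: rows_def row_def)
  then have "dim (rows B') \<le> dim (insert (row k B') (rows B))" by (rule dim_subset)
  also have "\<dots> \<le> dim (rows B) + 1" by (simp add: dim_insert)
  finally show ?thesis by (simp add: row_rank_def)
qed

lemma unit_steps_attain_intermediate_value:
  fixes f :: "nat \<Rightarrow> nat"
  assumes "f 0 \<le> r" "r \<le> f N" "\<forall>k<N. f (Suc k) \<le> f k + 1"
  shows "\<exists>k\<le>N. f k = r"
  using assms
proof (induction N)
  case 0 then show ?case by auto
next
  case (Suc N)
  show ?case
  proof (cases "r \<le> f N")
    case True
    with Suc.IH Suc.prems obtain k where "k \<le> N" "f k = r" by auto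
    then show ?thesis by (intro exI[of _ k]) auto
  next
    case False
    with Suc.prems have "f (Suc N) = r" by fastforce
    then show ?thesis by blast
  qed
qed

lemma matrix_add_rdistrib:
  fixes A B :: "'a::semiring_1^'n^'m" and C :: "'a^'p^'n"
  shows "(A + B) ** C = A ** C + B ** C"
  by (vector matrix_matrix_mult_def sum.distrib distrib_right)

definition diag_indicator :: "'n::finite set \<Rightarrow> real^'n^'n" where
  "diag_indicator K = (\<chi> i j. if i = j \<and> i \<in> K then 1 else 0)"

lemma diag_indicator_empty: "diag_indicator {} = 0"
  by (simp add: diag_indicator_def vec_eq_iff)

lemma diag_indicator_UNIV: "diag_indicator UNIV = mat 1"
  by (simp add: diag_indicator_def mat_def)

lemma diag_indicator_mult: "diag_indicator K ** X = (\<chi> i. if i \<in> K then X $ i else 0)"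
  by (simp add: diag_indicator_def matrix_matrix_mult_def vec_eq_iff if_distrib if_distribR
      sum.delta cong: if_cong)

lemma norm_diag_indicator_mult_le: "norm (diag_indicator K ** X) \<le> norm X"
  by (rule norm_le_componentwise_cart) (simp add: diag_indicator_mult)

lemma add_diag_indicator_offdiag:
  "i \<noteq> j \<Longrightarrow> (A + t *\<^sub>R diag_indicator K) $ i $ j = A $ i $ j"
  by (simp add: diag_indicator_def)

lemma add_diag_indicator_in_S_graph:
  assumes "A \<in> S_graph E"
  shows "A + t *\<^sub>R diag_indicator K \<in> S_graph E"
  using assms
  by (auto simp: S_graph_def symmetric_matrix_def diag_indicator_def transpose_def vec_eq_iff)

lemma hadamard_eq_if_offdiag_eq:
  assumes "hadamard (mat 1) X = 0" and "\<And>i j. i \<noteq> j \<Longrightarrow> A $ i $ j = B $ i $ j"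
  shows "hadamard A X = hadamard B X"
proof -
  have "X $ i $ i = 0" for i
    using arg_cong[OF assms(1), of "\<lambda>M. M $ i $ i"] by (simp add: hadamard_def mat_def)
  then show ?thesis
    using assms(2) by (auto simp: hadamard_def vec_eq_iff) (metis mult_zero_right)
qed

lemma SAP_add_small_diag_indicator:
  fixes A :: "real^'n::finite^'n"
  assumes "SAP A"
  obtains c where "c > 0" "\<And>t K. 0 < t \<Longrightarrow> t < c \<Longrightarrow> SAP (A + t *\<^sub>R diag_indicator K)"
proof -
  define V where "V = {X::real^'n^'n. symmetric_matrix X \<and> hadamard A X = 0 \<and> hadamard (mat 1) X = 0}"
  have "linear (\<lambda>X::real^'n^'n. A ** X)"
    by (rule linearI) (simp_all add: matrix_add_ldistrib matrix_scalar_ac scalar_matrix_assoc)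
  moreover have "subspace V"
    unfolding subspace_def V_def symmetric_matrix_def hadamard_def
    by (auto simp: vec_eq_iff transpose_def algebra_simps; metis add.right_neutral)
  moreover have "\<forall>X\<in>V. A ** X = 0 \<longrightarrow> X = 0"
    using assms unfolding SAP_def V_def by blast
  ultimately obtain c where c: "c > 0" "\<And>X. X \<in> V \<Longrightarrow> c * norm X \<le> norm (A ** X)"
    using linear_inj_on_subspace_bounded_below_pos by blast
  have "SAP (A + t *\<^sub>R diag_indicator K)" if t: "0 < t" "t < c" for t K
    unfolding SAP_def
  proof (intro allI impI)
    fix X :: "real^'n^'n"
    assume X: "symmetric_matrix X \<and> hadamard (A + t *\<^sub>R diag_indicator K) X = 0 \<and>
      hadamard (mat 1) X = 0 \<and> (A + t *\<^sub>R diag_indicator K) ** X = 0"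
    have "hadamard A X = hadamard (A + t *\<^sub>R diag_indicator K) X"
      using X add_diag_indicator_offdiag[symmetric] by (intro hadamard_eq_if_offdiag_eq) auto
    with X have "hadamard A X = 0" by simp
    with X have "X \<in> V" by (simp add: V_def)
    have "A ** X = - (t *\<^sub>R (diag_indicator K ** X))"
      using X by (simp add: matrix_add_rdistrib scalar_matrix_assoc eq_neg_iff_add_eq_0)
    then have "norm (A ** X) \<le> t * norm X"
      using t norm_diag_indicator_mult_le[of K X] by (simp add: mult_left_mono)
    then have "c * norm X \<le> t * norm X"
      using c(2)[OF \<open>X \<in> V\<close>] by linarith
    then show "X = 0"
      using t by (metis mult_right_le_imp_le not_less norm_eq_zero norm_ge_zero order.antisym)
  qed
  with c(1) show thesis by (rule that)
qed

lemma rank_add_small_identity: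
  fixes A :: "real^'n::finite^'n"
  assumes "symmetric_matrix A"
  obtains c where "c > 0" "\<And>t. 0 < t \<Longrightarrow> t < c \<Longrightarrow> rank (A + t *\<^sub>R mat 1) = CARD('n)"
proof -
  define W where "W = {v::real^'n. \<forall>w. A *v w = 0 \<longrightarrow> v \<bullet> w = 0}"
  have "subspace W"
    unfolding subspace_def W_def by (auto simp: inner_add_left)
  moreover have "\<forall>v\<in>W. A *v v = 0 \<longrightarrow> v = 0"
    unfolding W_def by auto
  ultimately obtain c where c: "c > 0" "\<And>v. v \<in> W \<Longrightarrow> c * norm v \<le> norm (A *v v)"
    using linear_inj_on_subspace_bounded_below_pos[OF matrix_vector_mul_linear] by blast
  have "rank (A + t *\<^sub>R mat 1) = CARD('n)" if t: "0 < t" "t < c" for t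
  proof (rule ccontr)
    assume "rank (A + t *\<^sub>R mat 1) \<noteq> CARD('n)"
    then obtain v where v: "v \<noteq> 0" "(A + t *\<^sub>R mat 1) *v v = 0"
      using matrix_nonfull_linear_equations_eq by blast
    then have Av: "A *v v = - (t *\<^sub>R v)"
      by (simp add: matrix_vector_mult_add_rdistrib scaleR_matrix_vector_assoc[symmetric]
          eq_neg_iff_add_eq_0)
    \<comment> \<open>By symmetry of A, an eigenvector for the nonzero eigenvalue -t is orthogonal to ker A.\<close>
    have "v \<in> W"
      unfolding W_def mem_Collect_eq
    proof (intro allI impI)
      fix w assume w: "A *v w = 0"
      have "(A *v v) \<bullet> w = v \<bullet> (A *v w)"
        by (metis assms dot_lmul_matrix symmetric_matrix_def transpose_matrix_vector)
      then show "v \<bullet> w = 0" using Av w t by simp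
    qed
    then have "c * norm v \<le> t * norm v" using c(2) Av t by fastforce
    then show False
      using t v by (metis mult_right_le_imp_le not_less norm_eq_zero norm_ge_zero order.antisym)
  qed
  with c(1) show thesis by (rule that)
qed

lemma rank_add_diag_indicator_insert:
  "rank (A + t *\<^sub>R diag_indicator (insert k K)) \<le> rank (A + t *\<^sub>R diag_indicator K) + 1"
  by (rule rank_le_Suc_rank_if_rows_agree_except[where k = k])
    (simp add: diag_indicator_def vec_eq_iff)

theorem corollary3p6:
  fixes E :: "'n::finite \<Rightarrow> 'n \<Rightarrow> bool" and A :: "real^'n^'n" and r' :: nat
  assumes "simple_graph E"
    and "A \<in> S_graph E"
    and "SAP A"
    and "rank A \<le> r'" and "r' \<le> CARD('n)"
  shows "\<exists>A'. A' \<in> S_graph E \<and> SAP A' \<and> rank A' = r'"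
proof -
  obtain c1 where c1: "c1 > 0" "\<And>t K. 0 < t \<Longrightarrow> t < c1 \<Longrightarrow> SAP (A + t *\<^sub>R diag_indicator K)"
    using SAP_add_small_diag_indicator[OF assms(3)] by blast
  have "symmetric_matrix A" using assms(2) by (simp add: S_graph_def)
  then obtain c2 where c2: "c2 > 0" "\<And>t. 0 < t \<Longrightarrow> t < c2 \<Longrightarrow> rank (A + t *\<^sub>R mat 1) = CARD('n)"
    using rank_add_small_identity by blast
  define t where "t = min c1 c2 / 2"
  have t: "0 < t" "t < c1" "t < c2" using c1 c2 by (auto simp: t_def)
  obtain xs :: "'n list" where xs: "set xs = UNIV" "distinct xs"
    using finite_distinct_list[OF finite_class.finite_UNIV] by blast
  define f where "f k = rank (A + t *\<^sub>R diag_indicator (set (take k xs)))" for k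
  have "f 0 = rank A" by (simp add: f_def diag_indicator_empty)
  moreover have "f (length xs) = CARD('n)"
    using c2(2)[OF t(1,3)] xs(1) by (simp add: f_def diag_indicator_UNIV)
  moreover have "f (Suc k) \<le> f k + 1" if "k < length xs" for k
    using that rank_add_diag_indicator_insert by (simp add: f_def take_Suc_conv_app_nth)
  ultimately obtain k where "f k = r'"
    using unit_steps_attain_intermediate_value[of f r' "length xs"] assms(4,5) by auto
  then show ?thesis
    using add_diag_indicator_in_S_graph[OF assms(2)] c1(2)[OF t(1,2)] by (auto simp: f_def)
qed

end
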